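(* Drift-less setting with target $\rho_d=|\Psi\rangle\langle\Psi|$. Let $D_k=D_{\mathcal N_k}\otimes I_{\bar{\mathcal N}_k}$ be QL operators with $D_k|\Psi\rangle=0$ such that $\mathfrak D(\mathcal H_0)$ is globally asymptotically stable for $\mathcal L_D=\mathcal L(0,\{D_k\})$ (every trajectory $e^{\mathcal L_Dt}(\rho_0)$, $\rho_0\in\mathfrak D(\mathcal H)$, converges to the set $\mathfrak D(\mathcal H_0)$). Let $\mathcal H'$ be a subspace with $\mathcal H_d\subseteq\mathcal H'\subseteq\mathcal H\ominus\mathcal H_w$ such that $\mathfrak D(\mathcal H')$ is invariant under $e^{\mathcal L_Dt}$ for all $t\ge0$. Then $\rho_d$ is conditionally asymptotically stable relative to $\mathcal H'$ for $\mathcal L_D$, i.e. $\rho_d$ is $\mathcal H'$-DQLS.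
   Context: $\mathcal H=\bigotimes_{a=1}^n\mathcal H_a$ finite-dimensional; neighborhoods $\mathcal N_k\subsetneq\{1,\dots,n\}$; QL operators have the form $X\otimes I_{\bar{\mathcal N}_k}$. $\mathfrak D(\mathcal K)$: density operators supported in $\mathcal K$. $\mathcal L(0,\{D_k\})(\rho)=\sum_k(D_k\rho D_k^\dagger-\frac12\{D_k^\dagger D_k,\rho\})$. $\mathcal H_d=\mathrm{span}\{|\Psi\rangle\}$; $\rho_{\mathcal N_k}=\mathrm{Tr}_{\bar{\mathcal N}_k}\rho_d$; $\mathcal H_0=\bigcap_k\mathrm{supp}(\rho_{\mathcal N_k}\otimes I_{\bar{\mathcal N}_k})$; $\mathcal H_w=\mathcal H_0\ominus\mathcal H_d$. Conditional asymptotic stability relative to $\mathcal H'$: $e^{\mathcal L_Dt}(\rho_0)\to\rho_d$ for all $\rho_0\in\mathfrak D(\mathcal H')$. *)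

theory Defs
  imports "HOL-Analysis.Analysis" "Jordan_Normal_Form.Matrix"
begin

text \<open>The system consists of n subsystems indexed 0..<n, subsystem a having dimension d a. A basis index j < N is identified with the
  multi-index of its mixed-radix digits (digit a is the basis label of subsystem a).\<close>

definition tdim :: "nat \<Rightarrow> (nat \<Rightarrow> nat) \<Rightarrow> nat" where
  "tdim n d = (\<Prod>a<n. d a)"

definition digit :: "(nat \<Rightarrow> nat) \<Rightarrow> nat \<Rightarrow> nat \<Rightarrow> nat" where
  "digit d a j = (j div (\<Prod>b<a. d b)) mod d a"

definition combine :: "nat \<Rightarrow> (nat \<Rightarrow> nat) \<Rightarrow> nat set \<Rightarrow> nat \<Rightarrow> nat \<Rightarrow> nat" where
  "combine n d S i j = (\<Sum>a<n. (if a \<in> S then digit d a i else digit d a j) * (\<Prod>b<a. d b))"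

definition restr :: "(nat \<Rightarrow> nat) \<Rightarrow> nat set \<Rightarrow> nat \<Rightarrow> (nat \<Rightarrow> nat)" where
  "restr d S i = (\<lambda>a. if a \<in> S then digit d a i else 0)"

text \<open>Quasi-local operator: of the form X \<otimes> I on the complement of the neighborhood S.\<close>
definition is_QL :: "nat \<Rightarrow> (nat \<Rightarrow> nat) \<Rightarrow> nat set \<Rightarrow> complex mat \<Rightarrow> bool" where
  "is_QL n d S M \<longleftrightarrow> M \<in> carrier_mat (tdim n d) (tdim n d) \<and>
     (\<exists>X :: (nat \<Rightarrow> nat) \<Rightarrow> (nat \<Rightarrow> nat) \<Rightarrow> complex.
        \<forall>i < tdim n d. \<forall>j < tdim n d.
          M $$ (i, j) = (if (\<forall>a<n. a \<notin> S \<longrightarrow> digit d a i = digit d a j)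
                         then X (restr d S i) (restr d S j) else 0))"

text \<open>Reduced state on S, tensored with the identity on the complement:
  (Tr_{complement of S} rho) \<otimes> I.\<close>
definition red_ext :: "nat \<Rightarrow> (nat \<Rightarrow> nat) \<Rightarrow> nat set \<Rightarrow> complex mat \<Rightarrow> complex mat" where
  "red_ext n d S \<rho> = mat (tdim n d) (tdim n d) (\<lambda>(i, j).
     if (\<forall>a<n. a \<notin> S \<longrightarrow> digit d a i = digit d a j)
     then (\<Sum>l \<in> {l. l < tdim n d \<and> (\<forall>a<n. a \<in> S \<longrightarrow> digit d a l = 0)}.
             \<rho> $$ (combine n d S i l, combine n d S j l))
     else 0)"

definition dag :: "complex mat \<Rightarrow> complex mat" where
  "dag A = mat (dim_col A) (dim_row A) (\<lambda>(i, j). cnj (A $$ (j, i)))"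

definition ip :: "complex vec \<Rightarrow> complex vec \<Rightarrow> complex" where
  "ip v w = (\<Sum>i<dim_vec v. cnj (v $ i) * w $ i)"

definition ket_bra :: "complex vec \<Rightarrow> complex mat" where
  "ket_bra v = mat (dim_vec v) (dim_vec v) (\<lambda>(i, j). v $ i * cnj (v $ j))"

definition is_subspace :: "nat \<Rightarrow> complex vec set \<Rightarrow> bool" where
  "is_subspace N V \<longleftrightarrow> V \<subseteq> carrier_vec N \<and> 0\<^sub>v N \<in> V \<and>
     (\<forall>v\<in>V. \<forall>w\<in>V. v + w \<in> V) \<and> (\<forall>c. \<forall>v\<in>V. c \<cdot>\<^sub>v v \<in> V)"

definition supp :: "nat \<Rightarrow> complex mat \<Rightarrow> complex vec set" where
  "supp N A = {A *\<^sub>v x | x. x \<in> carrier_vec N}"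

definition ortho_compl :: "nat \<Rightarrow> complex vec set \<Rightarrow> complex vec set" where
  "ortho_compl N V = {v \<in> carrier_vec N. \<forall>w\<in>V. ip w v = 0}"

definition density_ops :: "nat \<Rightarrow> complex vec set \<Rightarrow> complex mat set" where
  "density_ops N K = {\<rho> \<in> carrier_mat N N. dag \<rho> = \<rho> \<and>
      (\<forall>v \<in> carrier_vec N. 0 \<le> Re (ip v (\<rho> *\<^sub>v v))) \<and>
      (\<Sum>i<N. \<rho> $$ (i, i)) = 1 \<and> supp N \<rho> \<subseteq> K}"

definition lindblad :: "nat \<Rightarrow> nat \<Rightarrow> (nat \<Rightarrow> complex mat) \<Rightarrow> complex mat \<Rightarrow> complex mat" where
  "lindblad N m D \<rho> = mat N N (\<lambda>(i, j). \<Sum>k<m.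
     (D k * \<rho> * dag (D k)
      - (1/2 :: complex) \<cdot>\<^sub>m (dag (D k) * D k * \<rho> + \<rho> * (dag (D k) * D k))) $$ (i, j))"

definition evol :: "nat \<Rightarrow> (complex mat \<Rightarrow> complex mat) \<Rightarrow> real \<Rightarrow> complex mat \<Rightarrow> complex mat" where
  "evol N L t \<rho> = mat N N (\<lambda>(i, j).
     \<Sum>k. (complex_of_real (t ^ k / fact k)) * ((L ^^ k) \<rho>) $$ (i, j))"

text \<open>Convergence of matrices (entrywise; all norms are equivalent in finite dimension).\<close>
definition mat_tendsto :: "nat \<Rightarrow> (real \<Rightarrow> complex mat) \<Rightarrow> complex mat \<Rightarrow> bool" where
  "mat_tendsto N f A \<longleftrightarrow> (\<forall>i<N. \<forall>j<N. ((\<lambda>t. f t $$ (i, j)) \<longlongrightarrow> A $$ (i, j)) at_top)"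

definition mat_tendsto_set :: "nat \<Rightarrow> (real \<Rightarrow> complex mat) \<Rightarrow> complex mat set \<Rightarrow> bool" where
  "mat_tendsto_set N f S \<longleftrightarrow> (\<forall>e>0. \<exists>T. \<forall>t\<ge>T. \<exists>\<sigma>\<in>S.
      \<forall>i<N. \<forall>j<N. cmod (f t $$ (i, j) - \<sigma> $$ (i, j)) < e)"

definition Hd :: "complex vec \<Rightarrow> complex vec set" where
  "Hd \<Psi> = {c \<cdot>\<^sub>v \<Psi> | c. True}"

definition H0 :: "nat \<Rightarrow> (nat \<Rightarrow> nat) \<Rightarrow> nat \<Rightarrow> (nat \<Rightarrow> nat set) \<Rightarrow> complex vec \<Rightarrow> complex vec set" where
  "H0 n d m Nb \<Psi> = carrier_vec (tdim n d) \<inter>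
     (\<Inter>k\<in>{..<m}. supp (tdim n d) (red_ext n d (Nb k) (ket_bra \<Psi>)))"

definition Hw :: "nat \<Rightarrow> (nat \<Rightarrow> nat) \<Rightarrow> nat \<Rightarrow> (nat \<Rightarrow> nat set) \<Rightarrow> complex vec \<Rightarrow> complex vec set" where
  "Hw n d m Nb \<Psi> = H0 n d m Nb \<Psi> \<inter> ortho_compl (tdim n d) (Hd \<Psi>)"

definition cond_asym_stable :: "nat \<Rightarrow> (complex mat \<Rightarrow> complex mat) \<Rightarrow> complex mat \<Rightarrow> complex vec set \<Rightarrow> bool" where
  "cond_asym_stable N L \<rho>d H' \<longleftrightarrow>
     (\<forall>\<rho>0 \<in> density_ops N H'. mat_tendsto N (\<lambda>t. evol N L t \<rho>0) \<rho>d)"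

end

theory Submission
  imports Defs
begin

text \<open>Every D k annihilates \<Psi>, so the target \<rho>d = |\<Psi>\<rangle>\<langle>\<Psi>| is stationary; by global
  attractivity it is therefore a limit of states supported in H0, and H0 contains vectors
  arbitrarily close to \<Psi>. A state \<rho> supported in H', which is orthogonal to
  Hw = H0 \<inter> {\<Psi>}\<bottom>, annihilates Hw and hence acts on H0 as u \<mapsto> \<langle>\<Psi>,u\<rangle> \<rho>\<Psi>.

  Along a trajectory started in D(H') the state \<rho>(t) stays in D(H') and comes close to
  states \<sigma>(t) supported in H0. Then \<rho>(t)\<sigma>(t) = \<rho>(t)\<Psi> \<langle>\<Psi>|\<sigma>(t), and comparing this with
  \<rho>(t) \<rho>(t) shows that the Hilbert-Schmidt norm of (I - |\<Psi>\<rangle>\<langle>\<Psi>|) \<rho>(t) tends to 0.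
  Together with tr \<rho>(t) = 1 this forces \<rho>(t) \<rightarrow> |\<Psi>\<rangle>\<langle>\<Psi>|.\<close>

unbundle no vec_syntax

lemma mult_mat_vec_nth_sum:
  "A \<in> carrier_mat N N \<Longrightarrow> v \<in> carrier_vec N \<Longrightarrow> i < N \<Longrightarrow>
   (A *\<^sub>v v) $ i = (\<Sum>l<N. A $$ (i,l) * v $ l)"
  by (auto simp: scalar_prod_def row_def atLeast0LessThan intro!: sum.cong)

lemma mult_mat_nth_sum:
  assumes "A \<in> carrier_mat N N" "B \<in> carrier_mat N N" "i < N" "j < N"
  shows "(A * B) $$ (i,j) = (\<Sum>l<N. A $$ (i,l) * B $$ (l,j))"
  using assms by (auto simp: scalar_prod_def row_def col_def atLeast0LessThan intro!: sum.cong)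

lemma mult_mat_unit_vec_nth:
  fixes A :: "complex mat"
  assumes "A \<in> carrier_mat N N" "i < N" "k < N"
  shows "(A *\<^sub>v unit_vec N i) $ k = A $$ (k, i)"
  using assms
  by (simp add: mult_mat_vec_nth_sum if_distrib sum.delta cong: if_cong del: index_mult_mat_vec)

lemma mult_mat_vec_lincomb_nth:
  fixes A :: "complex mat"
  assumes "A \<in> carrier_mat N N" "u \<in> carrier_vec N" "y \<in> carrier_vec N" "i < N"
  shows "(A *\<^sub>v (a \<cdot>\<^sub>v u + b \<cdot>\<^sub>v y)) $ i = a * (A *\<^sub>v u) $ i + b * (A *\<^sub>v y) $ i"
proof -
  have "A *\<^sub>v (a \<cdot>\<^sub>v u + b \<cdot>\<^sub>v y) = a \<cdot>\<^sub>v (A *\<^sub>v u) + b \<cdot>\<^sub>v (A *\<^sub>v y)"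
    using assms mult_mat_vec[OF assms(1) assms(2)] mult_mat_vec[OF assms(1) assms(3)]
    by (simp add: mult_add_distrib_mat_vec)
  then show ?thesis using assms by simp
qed

lemma dag_carrier: "A \<in> carrier_mat N N \<Longrightarrow> dag A \<in> carrier_mat N N"
  by (simp add: dag_def)

lemma hermitian_cnj_entry:
  assumes "dag A = A" "A \<in> carrier_mat N N" "i < N" "j < N"
  shows "cnj (A $$ (i,j)) = A $$ (j,i)"
proof -
  have "dag A $$ (j,i) = cnj (A $$ (i,j))" using assms(2-4) by (simp add: dag_def)
  then show ?thesis using assms(1) by simp
qed

lemma cnj_mult_self: "cnj z * z = complex_of_real ((cmod z)\<^sup>2)"
  by (subst mult.commute) (rule complex_norm_square[symmetric])

lemma ip_cnj_swap:
  assumes "v \<in> carrier_vec N" "w \<in> carrier_vec N"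
  shows "ip v w = cnj (ip w v)"
  unfolding ip_def using assms by (simp add: cnj_sum mult.commute)

lemma ip_lincomb_right:
  assumes "w \<in> carrier_vec N" "u \<in> carrier_vec N" "y \<in> carrier_vec N"
  shows "ip w (a \<cdot>\<^sub>v u + b \<cdot>\<^sub>v y) = a * ip w u + b * ip w y"
  unfolding ip_def using assms by (simp add: sum.distrib sum_distrib_left algebra_simps)

lemma ip_smult_left:
  assumes "v \<in> carrier_vec N" "w \<in> carrier_vec N"
  shows "ip (c \<cdot>\<^sub>v v) w = cnj c * ip v w"
  unfolding ip_def using assms by (simp add: sum_distrib_left mult.assoc)

lemma ip_unit_vec:
  assumes "w \<in> carrier_vec N" "i < N"
  shows "ip (unit_vec N i) w = w $ i"
proof -
  have "ip (unit_vec N i) w = (\<Sum>k<N. if k = i then w $ k else 0)"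
    unfolding ip_def using assms by (intro sum.cong) auto
  then show ?thesis using assms by simp
qed

lemma ip_unit_vec_add:
  assumes "w \<in> carrier_vec N" "i < N" "j < N" "i \<noteq> j"
  shows "ip (unit_vec N i + b \<cdot>\<^sub>v unit_vec N j) w = w $ i + cnj b * w $ j"
proof -
  have "ip (unit_vec N i + b \<cdot>\<^sub>v unit_vec N j) w
     = (\<Sum>k<N. (if k = i then w $ k else 0) + (if k = j then cnj b * w $ k else 0))"
    unfolding ip_def using assms by (intro sum.cong) (auto simp: distrib_right)
  also have "\<dots> = w $ i + cnj b * w $ j" using assms by (simp add: sum.distrib)
  finally show ?thesis .
qed

lemma ip_hermitian_mult:
  assumes "dag A = A" "A \<in> carrier_mat N N" "v \<in> carrier_vec N" "w \<in> carrier_vec N"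
  shows "ip (A *\<^sub>v v) w = ip v (A *\<^sub>v w)"
proof -
  have "ip (A *\<^sub>v v) w = (\<Sum>i<N. \<Sum>l<N. cnj (A $$ (i,l)) * cnj (v $ l) * w $ i)"
    unfolding ip_def using assms
    by (simp add: mult_mat_vec_nth_sum cnj_sum sum_distrib_right del: index_mult_mat_vec)
  also have "\<dots> = (\<Sum>l<N. \<Sum>i<N. cnj (v $ l) * (A $$ (l,i) * w $ i))"
    by (subst sum.swap) (auto intro!: sum.cong simp: hermitian_cnj_entry[OF assms(1,2)])
  also have "\<dots> = ip v (A *\<^sub>v w)"
    unfolding ip_def using assms
    by (simp add: mult_mat_vec_nth_sum sum_distrib_left del: index_mult_mat_vec)
  finally show ?thesis .
qed

lemma ip_self_eq_0:
  assumes "v \<in> carrier_vec N" "ip v v = 0"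
  shows "v = 0\<^sub>v N"
proof -
  have "ip v v = (\<Sum>i<N. complex_of_real ((cmod (v $ i))\<^sup>2))"
    unfolding ip_def using assms(1) by (intro sum.cong) (simp_all only: cnj_mult_self, simp)
  then have "(\<Sum>i<N. (cmod (v $ i))\<^sup>2) = 0"
    using assms(2) by (metis of_real_eq_0_iff of_real_sum)
  then have "\<forall>i<N. cmod (v $ i) = 0"
    using sum_nonneg_eq_0_iff[of "{..<N}" "\<lambda>i. (cmod (v $ i))\<^sup>2"] by simp
  then show ?thesis using assms(1) by (intro eq_vecI) auto
qed

lemma supp_lincomb:
  assumes "A \<in> carrier_mat N N" "u \<in> supp N A" "y \<in> supp N A"
  shows "a \<cdot>\<^sub>v u + b \<cdot>\<^sub>v y \<in> supp N A"
proof -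
  obtain v w where v: "v \<in> carrier_vec N" "u = A *\<^sub>v v" and w: "w \<in> carrier_vec N" "y = A *\<^sub>v w"
    using assms(2,3) unfolding supp_def by blast
  have "A *\<^sub>v (a \<cdot>\<^sub>v v + b \<cdot>\<^sub>v w) = a \<cdot>\<^sub>v u + b \<cdot>\<^sub>v y"
    using v w assms(1) mult_mat_vec[OF assms(1) v(1)] mult_mat_vec[OF assms(1) w(1)]
    by (simp add: mult_add_distrib_mat_vec)
  moreover have "a \<cdot>\<^sub>v v + b \<cdot>\<^sub>v w \<in> carrier_vec N" using v w by simp
  ultimately show ?thesis unfolding supp_def by (intro CollectI exI[of _ "a \<cdot>\<^sub>v v + b \<cdot>\<^sub>v w"]) simp
qed

section \<open>Density operators\<close>

lemma density_opsD:
  assumes "\<rho> \<in> density_ops N K"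
  shows "\<rho> \<in> carrier_mat N N" "dag \<rho> = \<rho>"
    "\<And>v. v \<in> carrier_vec N \<Longrightarrow> 0 \<le> Re (ip v (\<rho> *\<^sub>v v))"
    "(\<Sum>i<N. \<rho> $$ (i, i)) = 1" "supp N \<rho> \<subseteq> K"
  using assms by (auto simp: density_ops_def)

lemma density_ops_subset_carrier: "density_ops N K \<subseteq> density_ops N (carrier_vec N)"
  unfolding density_ops_def supp_def by auto

lemma density_op_mult_vec_orthogonal:
  assumes "\<rho> \<in> density_ops N K" "x \<in> carrier_vec N" "\<And>h. h \<in> K \<Longrightarrow> ip x h = 0"
  shows "\<rho> *\<^sub>v x = 0\<^sub>v N"
proof -
  note \<rho> = density_opsD[OF assms(1)]
  define y where "y = \<rho> *\<^sub>v x"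
  have y: "y \<in> carrier_vec N" using \<rho>(1) assms(2) y_def by simp
  have "\<rho> *\<^sub>v y \<in> K" using \<rho>(5) y unfolding supp_def by blast
  then have "ip y y = 0"
    using assms(3) ip_hermitian_mult[OF \<rho>(2,1) assms(2) y] y_def by simp
  then show ?thesis unfolding y_def[symmetric] by (rule ip_self_eq_0[OF y])
qed

lemma density_op_diag:
  assumes "\<rho> \<in> density_ops N K" "i < N"
  shows "0 \<le> Re (\<rho> $$ (i,i))" "Im (\<rho> $$ (i,i)) = 0"
proof -
  note \<rho> = density_opsD[OF assms(1)]
  have "ip (unit_vec N i) (\<rho> *\<^sub>v unit_vec N i) = \<rho> $$ (i,i)"
    using \<rho>(1) assms(2) by (simp add: ip_unit_vec mult_mat_unit_vec_nth del: index_mult_mat_vec)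
  then show "0 \<le> Re (\<rho> $$ (i,i))" using \<rho>(3)[of "unit_vec N i"] assms(2) by simp
  have "cnj (\<rho> $$ (i,i)) = \<rho> $$ (i,i)" using hermitian_cnj_entry[OF \<rho>(2,1) assms(2) assms(2)] .
  then show "Im (\<rho> $$ (i,i)) = 0" by (metis cnj.simps(2) neg_equal_zero)
qed

lemma density_op_diag_sum_le_1:
  assumes "\<rho> \<in> density_ops N K" "I \<subseteq> {..<N}"
  shows "(\<Sum>i\<in>I. Re (\<rho> $$ (i,i))) \<le> 1"
proof -
  have "(\<Sum>i\<in>I. Re (\<rho> $$ (i,i))) \<le> (\<Sum>i<N. Re (\<rho> $$ (i,i)))"
    using assms density_op_diag(1)[OF assms(1)] by (intro sum_mono2) auto
  also have "\<dots> = 1" using density_opsD(4)[OF assms(1)] by (metis Re_sum one_complex.sel(1))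
  finally show ?thesis .
qed

text \<open>Positivity tested on unit_vec i + b unit_vec j, with b of modulus 1 chosen to rotate
  \<rho>(i,j) onto the negative real axis.\<close>
lemma density_op_offdiag_le:
  assumes "\<rho> \<in> density_ops N K" "i < N" "j < N" "i \<noteq> j"
  shows "2 * cmod (\<rho> $$ (i,j)) \<le> Re (\<rho> $$ (i,i)) + Re (\<rho> $$ (j,j))"
proof (cases "\<rho> $$ (i,j) = 0")
  case True
  then show ?thesis using density_op_diag(1)[OF assms(1)] assms by (simp add: add_nonneg_nonneg)
next
  case False
  note \<rho> = density_opsD[OF assms(1)]
  define r where "r = \<rho> $$ (i,j)"
  define b where "b = - cnj r / complex_of_real (cmod r)"
  have r0: "cmod r \<noteq> 0" using False r_def by simp
  have rr: "cnj r * r = complex_of_real (cmod r) * complex_of_real (cmod r)"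
    using cnj_mult_self[of r] by (simp add: power2_eq_square)
  then have "r * cnj r = complex_of_real (cmod r) * complex_of_real (cmod r)"
    by (simp add: mult.commute)
  then have br: "b * r = - complex_of_real (cmod r)"
    using r0 rr unfolding b_def by (simp add: field_simps)
  have cb: "cnj b * cnj r = - complex_of_real (cmod r)"
    using arg_cong[OF br, of cnj] by simp
  have "cmod b = 1" using r0 unfolding b_def by (simp add: norm_divide)
  then have bb: "cnj b * b = 1" by (simp add: cnj_mult_self)
  define v where "v = unit_vec N i + b \<cdot>\<^sub>v unit_vec N j"
  have v: "v \<in> carrier_vec N" unfolding v_def by simp
  have \<rho>v: "\<rho> *\<^sub>v v = \<rho> *\<^sub>v unit_vec N i + b \<cdot>\<^sub>v (\<rho> *\<^sub>v unit_vec N j)"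
    unfolding v_def using \<rho>(1) by (simp add: mult_add_distrib_mat_vec mult_mat_vec)
  have "ip v (\<rho> *\<^sub>v v) = (\<rho> *\<^sub>v v) $ i + cnj b * (\<rho> *\<^sub>v v) $ j"
    unfolding v_def using \<rho>(1) assms(2-4) by (intro ip_unit_vec_add) auto
  also have "\<dots> = \<rho> $$ (i,i) + b * \<rho> $$ (i,j) + cnj b * (\<rho> $$ (j,i) + b * \<rho> $$ (j,j))"
    unfolding \<rho>v using assms \<rho>(1) by (simp add: mult_mat_unit_vec_nth del: index_mult_mat_vec)
  also have "\<rho> $$ (j,i) = cnj r"
    unfolding r_def by (rule hermitian_cnj_entry[OF \<rho>(2,1) assms(2,3), symmetric])
  also have "\<rho> $$ (i,i) + b * \<rho> $$ (i,j) + cnj b * (cnj r + b * \<rho> $$ (j,j))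
     = \<rho> $$ (i,i) + \<rho> $$ (j,j) - 2 * complex_of_real (cmod r)"
    using br cb bb unfolding r_def[symmetric] by (simp add: algebra_simps)
  finally show ?thesis using \<rho>(3)[OF v] unfolding r_def by simp
qed

lemma density_op_entry_bounded:
  assumes "\<rho> \<in> density_ops N K" "i < N" "j < N"
  shows "cmod (\<rho> $$ (i,j)) \<le> 1"
proof (cases "i = j")
  case True
  have "\<rho> $$ (i,i) = complex_of_real (Re (\<rho> $$ (i,i)))"
    using density_op_diag(2)[OF assms(1,2)] by (simp add: complex_eq_iff)
  moreover have "Re (\<rho> $$ (i,i)) \<le> 1"
    using density_op_diag_sum_le_1[OF assms(1), of "{i}"] assms(2) by simp
  ultimately show ?thesis
    using True density_op_diag(1)[OF assms(1,2)] by (metis abs_of_nonneg norm_of_real)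
next
  case False
  then show ?thesis
    using density_op_offdiag_le[OF assms False] density_op_diag_sum_le_1[OF assms(1), of "{i,j}"] assms
    by simp
qed

lemma ket_bra_carrier: "\<Psi> \<in> carrier_vec N \<Longrightarrow> ket_bra \<Psi> \<in> carrier_mat N N"
  by (simp add: ket_bra_def)

lemma ket_bra_entry:
  "\<Psi> \<in> carrier_vec N \<Longrightarrow> i < N \<Longrightarrow> j < N \<Longrightarrow> ket_bra \<Psi> $$ (i,j) = \<Psi> $ i * cnj (\<Psi> $ j)"
  by (simp add: ket_bra_def)

lemma ket_bra_mult_vec_nth:
  assumes "\<Psi> \<in> carrier_vec N" "v \<in> carrier_vec N" "i < N"
  shows "(ket_bra \<Psi> *\<^sub>v v) $ i = \<Psi> $ i * ip \<Psi> v"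
proof -
  have "(ket_bra \<Psi> *\<^sub>v v) $ i = (\<Sum>l<N. ket_bra \<Psi> $$ (i,l) * v $ l)"
    by (rule mult_mat_vec_nth_sum[OF ket_bra_carrier[OF assms(1)] assms(2,3)])
  also have "\<dots> = (\<Sum>l<N. \<Psi> $ i * (cnj (\<Psi> $ l) * v $ l))"
    using assms by (intro sum.cong) (auto simp: ket_bra_entry mult.assoc)
  finally show ?thesis unfolding ip_def using assms by (simp add: sum_distrib_left)
qed

lemma ket_bra_density_op:
  assumes "\<Psi> \<in> carrier_vec N" "ip \<Psi> \<Psi> = 1"
  shows "ket_bra \<Psi> \<in> density_ops N (carrier_vec N)"
proof -
  have Q: "ket_bra \<Psi> \<in> carrier_mat N N" using ket_bra_carrier[OF assms(1)] .
  have "dag (ket_bra \<Psi>) = ket_bra \<Psi>"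
    using Q assms(1) by (intro eq_matI) (auto simp: dag_def ket_bra_entry)
  moreover have "0 \<le> Re (ip v (ket_bra \<Psi> *\<^sub>v v))" if v: "v \<in> carrier_vec N" for v
  proof -
    have "ip v (ket_bra \<Psi> *\<^sub>v v) = ip v \<Psi> * ip \<Psi> v"
      unfolding ip_def using v assms(1) Q
      by (simp add: ket_bra_mult_vec_nth[unfolded ip_def] sum_distrib_right mult.assoc
          del: index_mult_mat_vec)
    also have "ip v \<Psi> = cnj (ip \<Psi> v)" using ip_cnj_swap v assms(1) by blast
    finally show ?thesis by (simp add: cnj_mult_self)
  qed
  moreover have "(\<Sum>i<N. ket_bra \<Psi> $$ (i, i)) = ip \<Psi> \<Psi>"
    unfolding ip_def using assms(1) by (intro sum.cong) (auto simp: ket_bra_entry mult.commute)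
  moreover have "supp N (ket_bra \<Psi>) \<subseteq> carrier_vec N" using Q unfolding supp_def by auto
  ultimately show ?thesis unfolding density_ops_def using Q assms(2) by auto
qed

lemma ket_bra_annihilated:
  assumes D: "D \<in> carrier_mat N N" and \<Psi>: "\<Psi> \<in> carrier_vec N" and z: "D *\<^sub>v \<Psi> = 0\<^sub>v N"
  shows "D * ket_bra \<Psi> = 0\<^sub>m N N" "ket_bra \<Psi> * dag D = 0\<^sub>m N N"
proof -
  have Dz: "(\<Sum>l<N. D $$ (i,l) * \<Psi> $ l) = 0" if "i < N" for i
    using mult_mat_vec_nth_sum[OF D \<Psi> that] z that by simp
  show "D * ket_bra \<Psi> = 0\<^sub>m N N"
  proof (rule eq_matI)
    fix i j assume ij: "i < dim_row (0\<^sub>m N N)" "j < dim_col (0\<^sub>m N N)"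
    then have "(D * ket_bra \<Psi>) $$ (i,j) = (\<Sum>l<N. D $$ (i,l) * \<Psi> $ l) * cnj (\<Psi> $ j)"
      using mult_mat_nth_sum[OF D ket_bra_carrier[OF \<Psi>]] \<Psi>
      by (simp add: ket_bra_entry sum_distrib_right mult.assoc del: index_mult_mat)
    then show "(D * ket_bra \<Psi>) $$ (i,j) = 0\<^sub>m N N $$ (i,j)" using Dz ij by simp
  qed (use D \<Psi> in \<open>auto simp: ket_bra_def\<close>)
  show "ket_bra \<Psi> * dag D = 0\<^sub>m N N"
  proof (rule eq_matI)
    fix i j assume ij: "i < dim_row (0\<^sub>m N N)" "j < dim_col (0\<^sub>m N N)"
    then have "(ket_bra \<Psi> * dag D) $$ (i,j) = (\<Sum>l<N. \<Psi> $ i * cnj (\<Psi> $ l) * cnj (D $$ (j,l)))"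
      using mult_mat_nth_sum[OF ket_bra_carrier[OF \<Psi>] dag_carrier[OF D]] \<Psi> D
      by (auto simp: ket_bra_entry dag_def intro!: sum.cong simp del: index_mult_mat)
    also have "\<dots> = \<Psi> $ i * cnj (\<Sum>l<N. D $$ (j,l) * \<Psi> $ l)"
      by (simp add: sum_distrib_left cnj_sum mult.commute mult.left_commute)
    finally show "(ket_bra \<Psi> * dag D) $$ (i,j) = 0\<^sub>m N N $$ (i,j)"
      using Dz[of j] ij by (simp del: cnj_sum)
  qed (use D \<Psi> in \<open>auto simp: ket_bra_def dag_def\<close>)
qed

lemma lindblad_eq_zero:
  assumes D: "\<And>k. k < m \<Longrightarrow> D k \<in> carrier_mat N N" and \<rho>: "\<rho> \<in> carrier_mat N N"
    and left: "\<And>k. k < m \<Longrightarrow> D k * \<rho> = 0\<^sub>m N N"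
    and right: "\<And>k. k < m \<Longrightarrow> \<rho> * dag (D k) = 0\<^sub>m N N"
  shows "lindblad N m D \<rho> = 0\<^sub>m N N"
proof -
  have "D k * \<rho> * dag (D k)
      - (1/2 :: complex) \<cdot>\<^sub>m (dag (D k) * D k * \<rho> + \<rho> * (dag (D k) * D k)) = 0\<^sub>m N N"
    if k: "k < m" for k
  proof -
    have Dk: "D k \<in> carrier_mat N N" and Dd: "dag (D k) \<in> carrier_mat N N"
      using D[OF k] dag_carrier by auto
    have "D k * \<rho> * dag (D k) = 0\<^sub>m N N" using left[OF k] Dd by simp
    moreover have "dag (D k) * D k * \<rho> = 0\<^sub>m N N"
      using assoc_mult_mat[OF Dd Dk \<rho>] left[OF k] Dd by simp
    moreover have "\<rho> * (dag (D k) * D k) = 0\<^sub>m N N"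
      using assoc_mult_mat[OF \<rho> Dd Dk, symmetric] right[OF k] Dk by simp
    ultimately show ?thesis by simp
  qed
  then have "lindblad N m D \<rho> $$ (i,j) = 0" if "i < N" "j < N" for i j
    using that by (simp add: lindblad_def)
  then show ?thesis by (intro eq_matI) (auto simp: lindblad_def)
qed

lemma evol_stationary:
  assumes "L \<rho> = 0\<^sub>m N N" "L (0\<^sub>m N N) = 0\<^sub>m N N" "\<rho> \<in> carrier_mat N N"
  shows "evol N L t \<rho> = \<rho>"
proof -
  have higher: "(L ^^ Suc k) \<rho> = 0\<^sub>m N N" for k
    by (induction k) (use assms in auto)
  have "(\<Sum>k. complex_of_real (t ^ k / fact k) * (L ^^ k) \<rho> $$ (i, j)) = \<rho> $$ (i, j)"
    if "i < N" "j < N" for i j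
  proof -
    have "(\<Sum>k. complex_of_real (t ^ k / fact k) * (L ^^ k) \<rho> $$ (i, j))
        = (\<Sum>k\<in>{0}. complex_of_real (t ^ k / fact k) * (L ^^ k) \<rho> $$ (i, j))"
    proof (rule suminf_finite)
      fix k :: nat assume "k \<notin> {0}"
      then obtain k' where "k = Suc k'" by (cases k) auto
      then show "complex_of_real (t ^ k / fact k) * (L ^^ k) \<rho> $$ (i, j) = 0"
        using higher that by simp
    qed simp
    then show ?thesis by simp
  qed
  then show ?thesis using assms(3) by (intro eq_matI) (auto simp: evol_def)
qed

lemma evol_ket_bra_annihilated:
  assumes D: "\<And>k. k < m \<Longrightarrow> D k \<in> carrier_mat N N" and \<Psi>: "\<Psi> \<in> carrier_vec N"
    and ann: "\<And>k. k < m \<Longrightarrow> D k *\<^sub>v \<Psi> = 0\<^sub>v N"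
  shows "evol N (lindblad N m D) t (ket_bra \<Psi>) = ket_bra \<Psi>"
proof (rule evol_stationary)
  show "lindblad N m D (ket_bra \<Psi>) = 0\<^sub>m N N"
    using ket_bra_annihilated[OF D \<Psi> ann] by (intro lindblad_eq_zero D ket_bra_carrier \<Psi>)
  show "lindblad N m D (0\<^sub>m N N) = 0\<^sub>m N N"
  proof (rule lindblad_eq_zero[OF D zero_carrier_mat])
    fix k assume k: "k < m"
    show "D k * 0\<^sub>m N N = 0\<^sub>m N N" using D[OF k] by simp
  next
    fix k assume k: "k < m"
    show "0\<^sub>m N N * dag (D k) = 0\<^sub>m N N" using dag_carrier[OF D[OF k]] by simp
  qed
qed (rule ket_bra_carrier[OF \<Psi>])

lemma H0_carrier: "H0 n d m Nb \<Psi> \<subseteq> carrier_vec (tdim n d)"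
  unfolding H0_def by auto

lemma H0_lincomb:
  "u \<in> H0 n d m Nb \<Psi> \<Longrightarrow> y \<in> H0 n d m Nb \<Psi> \<Longrightarrow> a \<cdot>\<^sub>v u + b \<cdot>\<^sub>v y \<in> H0 n d m Nb \<Psi>"
  unfolding H0_def by (auto intro!: supp_lincomb simp: red_ext_def)

lemma Hw_memI:
  assumes "\<Psi> \<in> carrier_vec (tdim n d)" "x \<in> H0 n d m Nb \<Psi>" "ip \<Psi> x = 0"
  shows "x \<in> Hw n d m Nb \<Psi>"
proof -
  have x: "x \<in> carrier_vec (tdim n d)" using assms(2) H0_carrier by blast
  then show ?thesis
    using assms ip_smult_left[OF assms(1) x] unfolding Hw_def ortho_compl_def Hd_def by auto
qed

section \<open>Approximation along sequences\<close>

lemma mat_tendsto_set_approximants: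
  assumes approx: "mat_tendsto_set N f S" and frequent: "\<And>T. \<exists>t\<ge>T. P t"
  obtains ts \<sigma> where "\<And>k. P (ts k)" "\<And>k. \<sigma> k \<in> S"
    "\<And>k i j. i < N \<Longrightarrow> j < N \<Longrightarrow> cmod (f (ts k) $$ (i,j) - \<sigma> k $$ (i,j)) < 1 / real (Suc k)"
proof -
  have "\<forall>k. \<exists>p. P (fst p) \<and> snd p \<in> S \<and>
      (\<forall>i<N. \<forall>j<N. cmod (f (fst p) $$ (i,j) - snd p $$ (i,j)) < 1 / real (Suc k))"
  proof
    fix k
    have "0 < 1 / real (Suc k)" by simp
    then obtain T where T: "\<forall>t\<ge>T. \<exists>\<sigma>\<in>S.
        \<forall>i<N. \<forall>j<N. cmod (f t $$ (i,j) - \<sigma> $$ (i,j)) < 1 / real (Suc k)"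
      using approx unfolding mat_tendsto_set_def by blast
    obtain t where t: "T \<le> t" "P t" using frequent by blast
    with T obtain \<sigma> where "\<sigma> \<in> S" "\<forall>i<N. \<forall>j<N. cmod (f t $$ (i,j) - \<sigma> $$ (i,j)) < 1 / real (Suc k)"
      by blast
    with t show "\<exists>p. P (fst p) \<and> snd p \<in> S \<and>
        (\<forall>i<N. \<forall>j<N. cmod (f (fst p) $$ (i,j) - snd p $$ (i,j)) < 1 / real (Suc k))"
      by (intro exI[of _ "(t, \<sigma>)"]) simp
  qed
  from choice[OF this] obtain p where "\<forall>k. P (fst (p k)) \<and> snd (p k) \<in> S \<and>
      (\<forall>i<N. \<forall>j<N. cmod (f (fst (p k)) $$ (i,j) - snd (p k) $$ (i,j)) < 1 / real (Suc k))"
    ..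
  then show ?thesis by (intro that[of "\<lambda>k. fst (p k)" "\<lambda>k. snd (p k)"]) auto
qed

lemma mat_tendsto_of_approximating_sequences:
  assumes approx: "mat_tendsto_set N f S"
    and seq: "\<And>ts \<sigma> i j. (\<And>k. start \<le> ts k) \<Longrightarrow> (\<And>k. \<sigma> k \<in> S) \<Longrightarrow>
      (\<And>i' j'. i' < N \<Longrightarrow> j' < N \<Longrightarrow> (\<lambda>k. f (ts k) $$ (i',j') - \<sigma> k $$ (i',j')) \<longlonglongrightarrow> 0) \<Longrightarrow>
      i < N \<Longrightarrow> j < N \<Longrightarrow> (\<lambda>k. f (ts k) $$ (i,j)) \<longlonglongrightarrow> L $$ (i,j)"
  shows "mat_tendsto N f L"
  unfolding mat_tendsto_def
proof (intro allI impI)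
  fix i j assume ij: "i < N" "j < N"
  show "((\<lambda>t. f t $$ (i,j)) \<longlongrightarrow> L $$ (i,j)) at_top"
  proof (rule ccontr)
    assume "\<not> ((\<lambda>t. f t $$ (i,j)) \<longlongrightarrow> L $$ (i,j)) at_top"
    then obtain e where e: "e > 0" and late: "\<And>T. \<exists>t\<ge>T. \<not> dist (f t $$ (i,j)) (L $$ (i,j)) < e"
      unfolding tendsto_iff eventually_at_top_linorder by blast
    have frequent: "\<exists>t\<ge>T. start \<le> t \<and> \<not> dist (f t $$ (i,j)) (L $$ (i,j)) < e" for T
      using late[of "max T start"] by auto
    obtain ts \<sigma> where ts: "\<And>k. start \<le> ts k \<and> \<not> dist (f (ts k) $$ (i,j)) (L $$ (i,j)) < e"
      and \<sigma>: "\<And>k. \<sigma> k \<in> S"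
      and close: "\<And>k i' j'. i' < N \<Longrightarrow> j' < N \<Longrightarrow>
        cmod (f (ts k) $$ (i',j') - \<sigma> k $$ (i',j')) < 1 / real (Suc k)"
      using mat_tendsto_set_approximants[OF approx frequent] by blast
    have "(\<lambda>k. f (ts k) $$ (i',j') - \<sigma> k $$ (i',j')) \<longlonglongrightarrow> 0" if "i' < N" "j' < N" for i' j'
      using close[OF that] by (intro LIMSEQ_norm_0) simp
    then have "(\<lambda>k. f (ts k) $$ (i,j)) \<longlonglongrightarrow> L $$ (i,j)" using ts by (intro seq[OF _ \<sigma> _ ij]) auto
    then obtain k where "dist (f (ts k) $$ (i,j)) (L $$ (i,j)) < e"
      using metric_LIMSEQ_D[OF _ e] by blast
    then show False using ts by blast
  qed
qed

lemma vectors_in_support_tendsto: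
  assumes \<Psi>: "\<Psi> \<in> carrier_vec N" "ip \<Psi> \<Psi> = 1"
    and approx: "mat_tendsto_set N (\<lambda>_. ket_bra \<Psi>) (density_ops N K)"
  obtains y where "\<And>k. y k \<in> K" "\<And>j. j < N \<Longrightarrow> (\<lambda>k. y k $ j) \<longlonglongrightarrow> \<Psi> $ j"
proof -
  obtain ts \<sigma> where \<sigma>: "\<And>k. \<sigma> k \<in> density_ops N K"
    "\<And>k i j. i < N \<Longrightarrow> j < N \<Longrightarrow> cmod (ket_bra \<Psi> $$ (i,j) - \<sigma> k $$ (i,j)) < 1 / real (Suc k)"
    by (rule mat_tendsto_set_approximants[OF approx, of "\<lambda>_. True"]) auto
  have \<sigma>_conv: "(\<lambda>k. \<sigma> k $$ (i,j)) \<longlonglongrightarrow> \<Psi> $ i * cnj (\<Psi> $ j)" if "i < N" "j < N" for i j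
  proof -
    have "(\<lambda>k. \<sigma> k $$ (i,j) - ket_bra \<Psi> $$ (i,j)) \<longlonglongrightarrow> 0"
      using \<sigma>(2)[OF that] by (intro LIMSEQ_norm_0) (simp add: norm_minus_commute)
    from LIM_zero_cancel[OF this] show ?thesis using ket_bra_entry[OF \<Psi>(1) that] by simp
  qed
  have \<sigma>_carrier: "\<sigma> k \<in> carrier_mat N N" for k using density_opsD(1)[OF \<sigma>(1)] .
  show ?thesis
  proof
    show "\<sigma> k *\<^sub>v \<Psi> \<in> K" for k
      using density_opsD(5)[OF \<sigma>(1)] \<Psi>(1) unfolding supp_def by blast
    show "(\<lambda>k. (\<sigma> k *\<^sub>v \<Psi>) $ j) \<longlonglongrightarrow> \<Psi> $ j" if j: "j < N" for j
    proof -
      have "(\<lambda>k. \<Sum>l<N. \<sigma> k $$ (j,l) * \<Psi> $ l) \<longlonglongrightarrow> (\<Sum>l<N. \<Psi> $ j * cnj (\<Psi> $ l) * \<Psi> $ l)"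
        by (intro tendsto_sum tendsto_mult tendsto_const \<sigma>_conv) (use j in auto)
      also have "(\<Sum>l<N. \<Psi> $ j * cnj (\<Psi> $ l) * \<Psi> $ l) = \<Psi> $ j * ip \<Psi> \<Psi>"
        unfolding ip_def using \<Psi> by (simp add: sum_distrib_left mult.assoc)
      finally show ?thesis
        using \<Psi> j by (simp add: mult_mat_vec_nth_sum[OF \<sigma>_carrier \<Psi>(1) j] del: index_mult_mat_vec)
    qed
  qed
qed

text \<open>Any x \<in> K orthogonal to \<Psi> is annihilated by \<rho>; applied to
  x = \<langle>\<Psi>,y\<rangle> u - \<langle>\<Psi>,u\<rangle> y with y \<rightarrow> \<Psi> this gives the claim in the limit.\<close>
lemma density_op_rank_one_on_subspace:
  assumes \<Psi>: "\<Psi> \<in> carrier_vec N" "ip \<Psi> \<Psi> = 1"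
    and K: "K \<subseteq> carrier_vec N" "\<And>u y a b. u \<in> K \<Longrightarrow> y \<in> K \<Longrightarrow> a \<cdot>\<^sub>v u + b \<cdot>\<^sub>v y \<in> K"
    and orth: "\<And>h x. h \<in> H \<Longrightarrow> x \<in> K \<Longrightarrow> ip \<Psi> x = 0 \<Longrightarrow> ip x h = 0"
    and y: "\<And>k. y k \<in> K" "\<And>j. j < N \<Longrightarrow> (\<lambda>k. y k $ j) \<longlonglongrightarrow> \<Psi> $ j"
    and \<rho>: "\<rho> \<in> density_ops N H" and u: "u \<in> K"
  shows "\<rho> *\<^sub>v u = ip \<Psi> u \<cdot>\<^sub>v (\<rho> *\<^sub>v \<Psi>)"
proof (rule eq_vecI)
  note \<rho>_carrier = density_opsD(1)[OF \<rho>]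
  have u_carrier: "u \<in> carrier_vec N" and y_carrier: "\<And>k. y k \<in> carrier_vec N"
    using u y(1) K(1) by auto
  fix i assume "i < dim_vec (ip \<Psi> u \<cdot>\<^sub>v (\<rho> *\<^sub>v \<Psi>))"
  then have i: "i < N" using \<rho>_carrier by simp
  have balance: "ip \<Psi> (y k) * (\<rho> *\<^sub>v u) $ i = ip \<Psi> u * (\<rho> *\<^sub>v y k) $ i" for k
  proof -
    define x where "x = ip \<Psi> (y k) \<cdot>\<^sub>v u + (- ip \<Psi> u) \<cdot>\<^sub>v y k"
    have x: "x \<in> K" "x \<in> carrier_vec N" using K u y(1) unfolding x_def by auto
    have "ip \<Psi> x = 0" unfolding x_def using ip_lincomb_right[OF \<Psi>(1) u_carrier y_carrier] by simp
    then have "\<rho> *\<^sub>v x = 0\<^sub>v N" using orth x by (intro density_op_mult_vec_orthogonal[OF \<rho>]) auto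
    then have "(\<rho> *\<^sub>v x) $ i = 0" using i by simp
    then show ?thesis
      unfolding x_def mult_mat_vec_lincomb_nth[OF \<rho>_carrier u_carrier y_carrier i] by simp
  qed
  have "(\<lambda>k. ip \<Psi> (y k)) \<longlonglongrightarrow> ip \<Psi> \<Psi>"
    unfolding ip_def using \<Psi>(1) y_carrier by (simp, intro tendsto_sum tendsto_mult tendsto_const y(2)) auto
  then have "(\<lambda>k. ip \<Psi> (y k) * (\<rho> *\<^sub>v u) $ i) \<longlonglongrightarrow> (\<rho> *\<^sub>v u) $ i"
    using \<Psi>(2) by (auto intro: tendsto_eq_intros)
  moreover have "(\<lambda>k. ip \<Psi> (y k) * (\<rho> *\<^sub>v u) $ i) \<longlonglongrightarrow> ip \<Psi> u * (\<rho> *\<^sub>v \<Psi>) $ i"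
    unfolding balance using \<rho>_carrier y_carrier \<Psi>(1) i
    by (simp add: mult_mat_vec_nth_sum del: index_mult_mat_vec)
       (intro tendsto_mult tendsto_const tendsto_sum y(2), auto)
  ultimately have "(\<rho> *\<^sub>v u) $ i = ip \<Psi> u * (\<rho> *\<^sub>v \<Psi>) $ i" by (rule LIMSEQ_unique)
  then show "(\<rho> *\<^sub>v u) $ i = (ip \<Psi> u \<cdot>\<^sub>v (\<rho> *\<^sub>v \<Psi>)) $ i" using i \<rho>_carrier \<Psi> by simp
qed (use density_opsD(1)[OF \<rho>] u K(1) \<Psi> in auto)

lemma rank_one_mult_density_op:
  assumes rank_one: "\<And>u. u \<in> K \<Longrightarrow> \<rho> *\<^sub>v u = ip \<Psi> u \<cdot>\<^sub>v (\<rho> *\<^sub>v \<Psi>)"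
    and \<rho>: "\<rho> \<in> carrier_mat N N" and \<Psi>: "\<Psi> \<in> carrier_vec N"
    and \<sigma>: "\<sigma> \<in> density_ops N K" and ij: "i < N" "j < N"
  shows "(\<Sum>l<N. \<rho> $$ (i,l) * \<sigma> $$ (l,j)) = (\<Sum>l<N. cnj (\<Psi> $ l) * \<sigma> $$ (l,j)) * (\<rho> *\<^sub>v \<Psi>) $ i"
proof -
  note \<sigma>_carrier = density_opsD(1)[OF \<sigma>]
  define u where "u = \<sigma> *\<^sub>v unit_vec N j"
  have u: "u \<in> K"
    using density_opsD(5)[OF \<sigma>] unit_vec_carrier unfolding u_def supp_def by blast
  have u_carrier: "u \<in> carrier_vec N" using \<sigma>_carrier unfolding u_def by simp
  have u_nth: "u $ l = \<sigma> $$ (l,j)" if "l < N" for l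
    unfolding u_def using mult_mat_unit_vec_nth[OF \<sigma>_carrier ij(2) that] .
  have "(\<rho> *\<^sub>v u) $ i = (\<Sum>l<N. \<rho> $$ (i,l) * \<sigma> $$ (l,j))"
    using mult_mat_vec_nth_sum[OF \<rho> u_carrier ij(1)] u_nth by simp
  moreover have "(ip \<Psi> u \<cdot>\<^sub>v (\<rho> *\<^sub>v \<Psi>)) $ i = (\<Sum>l<N. cnj (\<Psi> $ l) * \<sigma> $$ (l,j)) * (\<rho> *\<^sub>v \<Psi>) $ i"
    using ij \<rho> \<Psi> u_nth unfolding ip_def by simp
  ultimately show ?thesis using rank_one[OF u] by simp
qed

section \<open>Convergence to the target\<close>

text \<open>The squared Hilbert-Schmidt norm of (I - |\<Psi>\<rangle>\<langle>\<Psi>|) R for hermitian R.\<close>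
definition rank_one_defect :: "nat \<Rightarrow> complex vec \<Rightarrow> complex mat \<Rightarrow> real" where
  "rank_one_defect N \<Psi> R = (\<Sum>i<N. \<Sum>j<N. (cmod (R $$ (i,j) - \<Psi> $ i * cnj ((R *\<^sub>v \<Psi>) $ j)))\<^sup>2)"

lemma rank_one_defect_eq:
  assumes R: "R \<in> carrier_mat N N" "dag R = R" and \<Psi>: "\<Psi> \<in> carrier_vec N" "ip \<Psi> \<Psi> = 1"
  shows "complex_of_real (rank_one_defect N \<Psi> R)
    = (\<Sum>i<N. \<Sum>l<N. R $$ (i,l) * R $$ (l,i)) - (\<Sum>i<N. cnj ((R *\<^sub>v \<Psi>) $ i) * (R *\<^sub>v \<Psi>) $ i)"
proof -
  define a where "a j = (R *\<^sub>v \<Psi>) $ j" for j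
  define X where "X = (\<Sum>j<N. a j * cnj (a j))"
  have a_sum: "a j = (\<Sum>l<N. R $$ (j,l) * \<Psi> $ l)" if "j < N" for j
    unfolding a_def using mult_mat_vec_nth_sum[OF R(1) \<Psi>(1) that] .
  have cnj_a: "cnj (a j) = (\<Sum>l<N. R $$ (l,j) * cnj (\<Psi> $ l))" if "j < N" for j
    using that by (auto simp: a_sum cnj_sum hermitian_cnj_entry[OF R(2,1)] intro!: sum.cong)
  have "complex_of_real (rank_one_defect N \<Psi> R)
      = (\<Sum>i<N. \<Sum>j<N. cnj (R $$ (i,j) - \<Psi> $ i * cnj (a j)) * (R $$ (i,j) - \<Psi> $ i * cnj (a j)))"
    unfolding rank_one_defect_def a_def cnj_mult_self by simp
  also have "\<dots> = (\<Sum>i<N. \<Sum>j<N. R $$ (j,i) * R $$ (i,j) - R $$ (j,i) * \<Psi> $ i * cnj (a j)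
      - cnj (\<Psi> $ i) * a j * R $$ (i,j) + cnj (\<Psi> $ i) * \<Psi> $ i * (a j * cnj (a j)))"
    by (intro sum.cong refl)
       (simp add: hermitian_cnj_entry[OF R(2,1)] algebra_simps)
  also have "\<dots> = (\<Sum>i<N. \<Sum>j<N. R $$ (j,i) * R $$ (i,j))
      - (\<Sum>i<N. \<Sum>j<N. R $$ (j,i) * \<Psi> $ i * cnj (a j))
      - (\<Sum>i<N. \<Sum>j<N. cnj (\<Psi> $ i) * a j * R $$ (i,j))
      + (\<Sum>i<N. \<Sum>j<N. cnj (\<Psi> $ i) * \<Psi> $ i * (a j * cnj (a j)))"
    by (simp add: sum.distrib sum_subtractf)
  also have "(\<Sum>i<N. \<Sum>j<N. R $$ (j,i) * R $$ (i,j)) = (\<Sum>i<N. \<Sum>l<N. R $$ (i,l) * R $$ (l,i))"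
    by (subst sum.swap) (simp add: mult.commute)
  also have "(\<Sum>i<N. \<Sum>j<N. R $$ (j,i) * \<Psi> $ i * cnj (a j)) = X"
    unfolding X_def by (subst sum.swap) (simp add: a_sum sum_distrib_right)
  also have "(\<Sum>i<N. \<Sum>j<N. cnj (\<Psi> $ i) * a j * R $$ (i,j)) = X"
    unfolding X_def
    by (subst sum.swap) (simp add: cnj_a sum_distrib_left mult.commute mult.left_commute)
  also have "(\<Sum>i<N. \<Sum>j<N. cnj (\<Psi> $ i) * \<Psi> $ i * (a j * cnj (a j))) = ip \<Psi> \<Psi> * X"
    unfolding X_def ip_def using \<Psi>(1) by (simp add: sum_product)
  finally show ?thesis using \<Psi>(2) unfolding X_def a_def by (simp add: mult.commute)
qed

lemma tendsto_bounded_mult_0: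
  fixes f g :: "'b \<Rightarrow> 'a::real_normed_algebra"
  assumes "\<And>x. norm (f x) \<le> B" "(g \<longlongrightarrow> 0) F"
  shows "((\<lambda>x. f x * g x) \<longlongrightarrow> 0) F"
proof -
  have "Bfun f F" using assms(1) by (intro BfunI[where K = B] always_eventually) simp
  moreover have "Zfun g F" using assms(2) by (simp add: tendsto_Zfun_iff)
  ultimately have "Zfun (\<lambda>x. f x * g x) F"
    by (rule bounded_bilinear.Bfun_prod_Zfun[OF bounded_bilinear_mult])
  then show ?thesis by (simp add: tendsto_Zfun_iff)
qed

text \<open>R acts on the support of S as u \<mapsto> \<langle>\<Psi>,u\<rangle> R\<Psi>, so R S = (R\<Psi>) (\<langle>\<Psi>|S); hence the
  defect tr (R R) - |R\<Psi>|^2 is controlled by R - S.\<close>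
lemma rank_one_defect_via_support:
  assumes \<Psi>: "\<Psi> \<in> carrier_vec N" "ip \<Psi> \<Psi> = 1"
    and \<rho>: "\<rho> \<in> density_ops N H" and \<sigma>: "\<sigma> \<in> density_ops N K"
    and rank_one: "\<And>u. u \<in> K \<Longrightarrow> \<rho> *\<^sub>v u = ip \<Psi> u \<cdot>\<^sub>v (\<rho> *\<^sub>v \<Psi>)"
  shows "complex_of_real (rank_one_defect N \<Psi> \<rho>)
    = (\<Sum>i<N. \<Sum>l<N. \<rho> $$ (i,l) * (\<rho> $$ (l,i) - \<sigma> $$ (l,i)))
      - (\<Sum>i<N. (\<Sum>l<N. cnj (\<Psi> $ l) * (\<rho> $$ (l,i) - \<sigma> $$ (l,i))) * (\<rho> *\<^sub>v \<Psi>) $ i)"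
proof -
  note \<rho>_carrier = density_opsD(1)[OF \<rho>] and \<rho>_hermitian = density_opsD(2)[OF \<rho>]
  define a where "a i = (\<rho> *\<^sub>v \<Psi>) $ i" for i
  have "(\<Sum>l<N. cnj (\<Psi> $ l) * (\<rho> $$ (l,i) - \<sigma> $$ (l,i)))
      = cnj (a i) - (\<Sum>l<N. cnj (\<Psi> $ l) * \<sigma> $$ (l,i))" if "i < N" for i
    using that unfolding a_def
    by (auto simp: mult_mat_vec_nth_sum[OF \<rho>_carrier \<Psi>(1)] cnj_sum right_diff_distrib sum_subtractf
        hermitian_cnj_entry[OF \<rho>_hermitian \<rho>_carrier] mult.commute
        simp del: index_mult_mat_vec intro!: sum.cong)
  moreover have "(\<Sum>i<N. \<Sum>l<N. \<rho> $$ (i,l) * \<sigma> $$ (l,i))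
      = (\<Sum>i<N. (\<Sum>l<N. cnj (\<Psi> $ l) * \<sigma> $$ (l,i)) * a i)"
    unfolding a_def by (intro sum.cong refl rank_one_mult_density_op[OF rank_one \<rho>_carrier \<Psi>(1) \<sigma>]) auto
  ultimately show ?thesis
    unfolding rank_one_defect_eq[OF \<rho>_carrier \<rho>_hermitian \<Psi>] a_def[symmetric]
    by (simp add: right_diff_distrib left_diff_distrib sum_subtractf)
qed

lemma rank_one_defect_tendsto_0:
  assumes \<Psi>: "\<Psi> \<in> carrier_vec N" "ip \<Psi> \<Psi> = 1"
    and r: "\<And>x. r x \<in> density_ops N H" and s: "\<And>x. s x \<in> density_ops N K"
    and close: "\<And>i j. i < N \<Longrightarrow> j < N \<Longrightarrow> ((\<lambda>x. r x $$ (i,j) - s x $$ (i,j)) \<longlongrightarrow> 0) F"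
    and rank_one: "\<And>x u. u \<in> K \<Longrightarrow> r x *\<^sub>v u = ip \<Psi> u \<cdot>\<^sub>v (r x *\<^sub>v \<Psi>)"
  shows "((\<lambda>x. rank_one_defect N \<Psi> (r x)) \<longlongrightarrow> 0) F"
proof -
  note r_carrier = density_opsD(1)[OF r]
  have r_bounded: "cmod (r x $$ (i,j)) \<le> 1" if "i < N" "j < N" for x i j
    using density_op_entry_bounded[OF r that] .
  have a_bounded: "cmod ((r x *\<^sub>v \<Psi>) $ i) \<le> (\<Sum>l<N. cmod (\<Psi> $ l))" if "i < N" for x i
    unfolding mult_mat_vec_nth_sum[OF r_carrier \<Psi>(1) that] using r_bounded that
    by (intro order.trans[OF norm_sum] sum_mono) (auto simp: norm_mult mult_left_le_one_le)
  have "((\<lambda>x. (\<Sum>i<N. \<Sum>l<N. r x $$ (i,l) * (r x $$ (l,i) - s x $$ (l,i)))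
      - (\<Sum>i<N. (\<Sum>l<N. cnj (\<Psi> $ l) * (r x $$ (l,i) - s x $$ (l,i))) * (r x *\<^sub>v \<Psi>) $ i))
      \<longlongrightarrow> 0 - 0) F"
  proof (intro tendsto_diff tendsto_null_sum)
    fix i l assume "i \<in> {..<N}" "l \<in> {..<N}"
    then show "((\<lambda>x. r x $$ (i,l) * (r x $$ (l,i) - s x $$ (l,i))) \<longlongrightarrow> 0) F"
      using r_bounded close by (intro tendsto_bounded_mult_0) auto
  next
    fix i assume i: "i \<in> {..<N}"
    have "((\<lambda>x. \<Sum>l<N. cnj (\<Psi> $ l) * (r x $$ (l,i) - s x $$ (l,i))) \<longlongrightarrow> 0) F"
      using close i by (auto intro!: tendsto_null_sum tendsto_mult_right_zero)
    then have "((\<lambda>x. (r x *\<^sub>v \<Psi>) $ i * (\<Sum>l<N. cnj (\<Psi> $ l) * (r x $$ (l,i) - s x $$ (l,i))))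
        \<longlongrightarrow> 0) F"
      using a_bounded i by (intro tendsto_bounded_mult_0) auto
    then show "((\<lambda>x. (\<Sum>l<N. cnj (\<Psi> $ l) * (r x $$ (l,i) - s x $$ (l,i))) * (r x *\<^sub>v \<Psi>) $ i)
        \<longlongrightarrow> 0) F"
      by (simp add: mult.commute)
  qed
  moreover have "complex_of_real (rank_one_defect N \<Psi> (r x))
    = (\<Sum>i<N. \<Sum>l<N. r x $$ (i,l) * (r x $$ (l,i) - s x $$ (l,i)))
      - (\<Sum>i<N. (\<Sum>l<N. cnj (\<Psi> $ l) * (r x $$ (l,i) - s x $$ (l,i))) * (r x *\<^sub>v \<Psi>) $ i)" for x
    by (rule rank_one_defect_via_support[OF \<Psi> r s rank_one])
  ultimately have "((\<lambda>x. complex_of_real (rank_one_defect N \<Psi> (r x))) \<longlongrightarrow> 0) F" by simp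
  then show ?thesis using tendsto_Re by fastforce
qed

lemma tendsto_rank_one_defect_entry:
  assumes defect: "((\<lambda>x. rank_one_defect N \<Psi> (R x)) \<longlongrightarrow> 0) F" and ij: "i < N" "j < N"
  shows "((\<lambda>x. R x $$ (i,j) - \<Psi> $ i * cnj ((R x *\<^sub>v \<Psi>) $ j)) \<longlongrightarrow> 0) F"
proof -
  define M where "M x i j = R x $$ (i,j) - \<Psi> $ i * cnj ((R x *\<^sub>v \<Psi>) $ j)" for x i j
  have "(cmod (M x i j))\<^sup>2 \<le> rank_one_defect N \<Psi> (R x)" for x
  proof -
    have "(cmod (M x i j))\<^sup>2 \<le> (\<Sum>j'<N. (cmod (M x i j'))\<^sup>2)"
      using ij by (intro member_le_sum) auto
    also have "\<dots> \<le> (\<Sum>i'<N. \<Sum>j'<N. (cmod (M x i' j'))\<^sup>2)"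
      using ij by (intro member_le_sum[where f = "\<lambda>i'. \<Sum>j'<N. (cmod (M x i' j'))\<^sup>2"] sum_nonneg) auto
    finally show ?thesis unfolding rank_one_defect_def M_def .
  qed
  then have "((\<lambda>x. (cmod (M x i j))\<^sup>2) \<longlongrightarrow> 0) F"
    by (intro tendsto_sandwich[OF _ _ tendsto_const defect]) auto
  from tendsto_real_sqrt[OF this] show ?thesis unfolding M_def by (simp add: tendsto_norm_zero_iff)
qed

lemma tendsto_ket_bra_of_rank_one_defect:
  assumes \<Psi>: "\<Psi> \<in> carrier_vec N" and r: "\<And>x. r x \<in> density_ops N H"
    and defect: "((\<lambda>x. rank_one_defect N \<Psi> (r x)) \<longlongrightarrow> 0) F" and ij: "i < N" "j < N"
  shows "((\<lambda>x. r x $$ (i,j)) \<longlongrightarrow> ket_bra \<Psi> $$ (i,j)) F"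
proof -
  note r_carrier = density_opsD(1)[OF r]
  define a where "a x j = (r x *\<^sub>v \<Psi>) $ j" for x j
  define M where "M x i j = r x $$ (i,j) - \<Psi> $ i * cnj (a x j)" for x i j
  define c where "c x = (\<Sum>l<N. cnj (a x l) * \<Psi> $ l)" for x
  have M_tendsto: "((\<lambda>x. M x i j) \<longlongrightarrow> 0) F" if "i < N" "j < N" for i j
    unfolding M_def a_def by (rule tendsto_rank_one_defect_entry[OF defect that])
  have "c = (\<lambda>x. 1 - (\<Sum>i<N. M x i i))"
  proof
    fix x
    have "(\<Sum>i<N. r x $$ (i,i)) = (\<Sum>i<N. M x i i) + c x"
      unfolding M_def c_def by (simp add: sum_subtractf mult.commute)
    then show "c x = 1 - (\<Sum>i<N. M x i i)" using density_opsD(4)[OF r] by (simp add: algebra_simps)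
  qed
  moreover have "((\<lambda>x. 1 - (\<Sum>i<N. M x i i)) \<longlongrightarrow> 1 - 0) F"
    by (intro tendsto_diff tendsto_const tendsto_null_sum M_tendsto) auto
  ultimately have c_tendsto: "(c \<longlongrightarrow> 1) F" by simp
  have a_tendsto: "((\<lambda>x. a x j) \<longlongrightarrow> \<Psi> $ j) F" if j: "j < N" for j
  proof -
    have "a x j = (\<Sum>l<N. M x j l * \<Psi> $ l) + \<Psi> $ j * c x" for x
      using j \<Psi> unfolding M_def c_def a_def
      by (simp add: mult_mat_vec_nth_sum[OF r_carrier \<Psi> j] left_diff_distrib sum_subtractf
          sum_distrib_left mult.assoc del: index_mult_mat_vec)
    moreover have "((\<lambda>x. (\<Sum>l<N. M x j l * \<Psi> $ l) + \<Psi> $ j * c x) \<longlongrightarrow> 0 + \<Psi> $ j * 1) F"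
      using j by (intro tendsto_add tendsto_null_sum tendsto_mult_left_zero tendsto_mult
          tendsto_const c_tendsto M_tendsto) auto
    ultimately show ?thesis by simp
  qed
  have "((\<lambda>x. M x i j + \<Psi> $ i * cnj (a x j)) \<longlongrightarrow> 0 + \<Psi> $ i * cnj (\<Psi> $ j)) F"
    by (intro tendsto_add tendsto_mult tendsto_const tendsto_cnj M_tendsto a_tendsto ij)
  then show ?thesis unfolding M_def using ket_bra_entry[OF \<Psi> ij] by simp
qed

lemma trajectory_tendsto_ket_bra:
  assumes \<Psi>: "\<Psi> \<in> carrier_vec N" "ip \<Psi> \<Psi> = 1"
    and approach: "mat_tendsto_set N f (density_ops N K)"
    and stays: "\<And>t. 0 \<le> t \<Longrightarrow> f t \<in> density_ops N H"
    and rank_one: "\<And>\<rho> u. \<rho> \<in> density_ops N H \<Longrightarrow> u \<in> K \<Longrightarrow> \<rho> *\<^sub>v u = ip \<Psi> u \<cdot>\<^sub>v (\<rho> *\<^sub>v \<Psi>)"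
  shows "mat_tendsto N f (ket_bra \<Psi>)"
proof (rule mat_tendsto_of_approximating_sequences[OF approach, where start = 0])
  fix ts \<sigma> i j assume ts: "\<And>k. 0 \<le> ts k" and \<sigma>: "\<And>k. \<sigma> k \<in> density_ops N K"
    and close: "\<And>i j. i < N \<Longrightarrow> j < N \<Longrightarrow> (\<lambda>k. f (ts k) $$ (i,j) - \<sigma> k $$ (i,j)) \<longlonglongrightarrow> 0"
    and ij: "i < N" "j < N"
  have r: "f (ts k) \<in> density_ops N H" for k using stays[OF ts] .
  show "(\<lambda>k. f (ts k) $$ (i,j)) \<longlonglongrightarrow> ket_bra \<Psi> $$ (i,j)"
    using rank_one_defect_tendsto_0[OF \<Psi> r \<sigma> close rank_one[OF r]]
    by (rule tendsto_ket_bra_of_rank_one_defect[OF \<Psi>(1) r _ ij])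
qed

theorem theorem3:
  fixes n m :: nat and d :: "nat \<Rightarrow> nat" and Nb :: "nat \<Rightarrow> nat set"
    and D :: "nat \<Rightarrow> complex mat" and \<Psi> :: "complex vec" and H' :: "complex vec set"
  assumes dims: "\<forall>a<n. 0 < d a"
    and nbhd: "\<forall>k<m. Nb k \<subset> {..<n}"
    and psi: "\<Psi> \<in> carrier_vec (tdim n d)" "ip \<Psi> \<Psi> = 1"
    and QL: "\<forall>k<m. is_QL n d (Nb k) (D k)"
    and ann: "\<forall>k<m. D k *\<^sub>v \<Psi> = 0\<^sub>v (tdim n d)"
    and GAS: "\<forall>\<rho>0 \<in> density_ops (tdim n d) (carrier_vec (tdim n d)).
               mat_tendsto_set (tdim n d) (\<lambda>t. evol (tdim n d) (lindblad (tdim n d) m D) t \<rho>0)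
                 (density_ops (tdim n d) (H0 n d m Nb \<Psi>))"
    and sub: "is_subspace (tdim n d) H'"
    and Hd_sub: "Hd \<Psi> \<subseteq> H'"
    and sub_Hw: "H' \<subseteq> ortho_compl (tdim n d) (Hw n d m Nb \<Psi>)"
    and inv: "\<forall>\<rho>0 \<in> density_ops (tdim n d) H'. \<forall>t\<ge>0.
               evol (tdim n d) (lindblad (tdim n d) m D) t \<rho>0 \<in> density_ops (tdim n d) H'"
  shows "cond_asym_stable (tdim n d) (lindblad (tdim n d) m D) (ket_bra \<Psi>) H'"
proof -
  define N where "N = tdim n d"
  define L where "L = lindblad N m D"
  define K0 where "K0 = H0 n d m Nb \<Psi>"
  have \<Psi>: "\<Psi> \<in> carrier_vec N" using psi(1) unfolding N_def .
  have D: "\<And>k. k < m \<Longrightarrow> D k \<in> carrier_mat N N" using QL unfolding is_QL_def N_def by blast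
  have K0: "K0 \<subseteq> carrier_vec N" "\<And>u y a b. u \<in> K0 \<Longrightarrow> y \<in> K0 \<Longrightarrow> a \<cdot>\<^sub>v u + b \<cdot>\<^sub>v y \<in> K0"
    unfolding K0_def N_def by (auto intro: H0_carrier[THEN subsetD] H0_lincomb)
  have orth: "ip x h = 0" if "h \<in> H'" "x \<in> K0" "ip \<Psi> x = 0" for h x
    using sub_Hw Hw_memI[OF psi(1)] that unfolding ortho_compl_def K0_def by blast
  have "mat_tendsto_set N (\<lambda>t. evol N L t (ket_bra \<Psi>)) (density_ops N K0)"
    using GAS ket_bra_density_op[OF \<Psi> psi(2)] unfolding N_def L_def K0_def by blast
  moreover have "evol N L t (ket_bra \<Psi>) = ket_bra \<Psi>" for t
    unfolding L_def using evol_ket_bra_annihilated[OF D \<Psi>] ann N_def by simp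
  ultimately obtain y where y: "\<And>k. y k \<in> K0" "\<And>j. j < N \<Longrightarrow> (\<lambda>k. y k $ j) \<longlonglongrightarrow> \<Psi> $ j"
    using vectors_in_support_tendsto[OF \<Psi> psi(2)] by auto
  have rank_one: "\<rho> *\<^sub>v u = ip \<Psi> u \<cdot>\<^sub>v (\<rho> *\<^sub>v \<Psi>)" if "\<rho> \<in> density_ops N H'" "u \<in> K0" for \<rho> u
    using density_op_rank_one_on_subspace[OF \<Psi> psi(2) K0 orth y that] by blast
  show ?thesis
    unfolding cond_asym_stable_def N_def[symmetric] L_def[symmetric]
  proof
    fix \<rho>0 assume \<rho>0: "\<rho>0 \<in> density_ops N H'"
    show "mat_tendsto N (\<lambda>t. evol N L t \<rho>0) (ket_bra \<Psi>)"
    proof (rule trajectory_tendsto_ket_bra[OF \<Psi> psi(2) _ _ rank_one])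
      show "mat_tendsto_set N (\<lambda>t. evol N L t \<rho>0) (density_ops N K0)"
        using GAS \<rho>0 density_ops_subset_carrier unfolding N_def L_def K0_def by blast
      show "evol N L t \<rho>0 \<in> density_ops N H'" if "0 \<le> t" for t
        using inv \<rho>0 that unfolding N_def L_def by blast
    qed
  qed
qed

end
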